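(* Let $\mathbf{u}\in[-1,1]^m$ satisfy $\langle\mathbf{1},\mathbf{u}\rangle=0$, and let $\mathcal{P}=\{\mathbf{p}\in[0,2]^m:\langle\mathbf{1},\mathbf{p}\rangle=m\}$. Consider the two-player zero-sum game $\Gamma_0$ in which the principal chooses $\mathbf{p}\in\mathcal{P}$, the agent chooses $\mathbf{x}\in\Delta(m)$, the agent's utility is $\langle\mathbf{u}+\mathbf{p},\mathbf{x}\rangle$ and the principal's utility is $-\langle\mathbf{u}+\mathbf{p},\mathbf{x}\rangle$. Then in every $\varepsilon$-Nash equilibrium $(\mathbf{p},\mathbf{x})$ of $\Gamma_0$, the principal's strategy has the form $\mathbf{p}=\mathbf{1}-\mathbf{u}+\mathbf{z}$ with $\|\mathbf{z}\|_1\le 4m\varepsilon$.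
   Context: $\mathbf{1}$ is the all-ones vector in $\mathbb{R}^m$ and $\Delta(m)$ is the probability simplex. An $\varepsilon$-Nash equilibrium is a pair in which neither player can gain more than $\varepsilon$ by a unilateral deviation. *)

theory Defs
  imports "HOL-Analysis.Analysis"
begin

text \<open>Vectors in R^m are modelled as real^'m with m = CARD('m).\<close>

definition ones :: "real ^ 'm" where
  "ones = (\<chi> i. 1)"

definition prob_simplex :: "(real ^ 'm) set" where
  "prob_simplex = {x. (\<forall>i. 0 \<le> x $ i) \<and> (\<Sum>i\<in>UNIV. x $ i) = 1}"

definition principal_set :: "(real ^ 'm) set" where
  "principal_set = {p. (\<forall>i. 0 \<le> p $ i \<and> p $ i \<le> 2) \<and> ones \<bullet> p = real CARD('m)}"

definition agent_util :: "real ^ 'm \<Rightarrow> real ^ 'm \<Rightarrow> real ^ 'm \<Rightarrow> real" where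
  "agent_util u p x = (u + p) \<bullet> x"

definition eps_nash_Gamma0 :: "real ^ 'm \<Rightarrow> real \<Rightarrow> real ^ 'm \<Rightarrow> real ^ 'm \<Rightarrow> bool" where
  "eps_nash_Gamma0 u \<epsilon> p x \<longleftrightarrow>
     p \<in> principal_set \<and> x \<in> prob_simplex \<and>
     (\<forall>x'\<in>prob_simplex. agent_util u p x' \<le> agent_util u p x + \<epsilon>) \<and>
     (\<forall>p'\<in>principal_set. - agent_util u p' x \<le> - agent_util u p x + \<epsilon>)"

definition l1norm :: "real ^ 'm \<Rightarrow> real" where
  "l1norm z = (\<Sum>i\<in>UNIV. \<bar>z $ i\<bar>)"

end

theory Submission
  imports Defs
begin

text \<open>Against the deviation \<open>p' = 1 - u\<close> every mixed strategy of the agent earns exactly 1,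
  so in an \<open>\<epsilon>\<close>-equilibrium the agent's payoff is at most \<open>1 + \<epsilon>\<close>. Comparing with the pure
  deviations of the agent gives \<open>z\<^sub>i = u\<^sub>i + p\<^sub>i - 1 \<le> 2\<epsilon>\<close> for every \<open>i\<close>. Since \<open>z\<close> sums to zero,
  its \<open>\<ell>\<^sub>1\<close>-norm is twice the sum of its positive parts, hence at most \<open>4m\<epsilon>\<close>.\<close>

lemma ones_nth [simp]: "ones $ i = 1"
  by (simp add: ones_def)

lemma inner_ones_left: "ones \<bullet> v = (\<Sum>i\<in>UNIV. v $ i)"
  by (simp add: inner_vec_def)

lemma axis_in_prob_simplex: "axis i 1 \<in> prob_simplex"
  by (simp add: prob_simplex_def axis_def sum.delta)

lemma ones_minus_in_principal_set:
  assumes "\<forall>i. -1 \<le> u $ i \<and> u $ i \<le> 1" and "ones \<bullet> u = 0"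
  shows "ones - u \<in> principal_set"
  using assms by (simp add: principal_set_def inner_diff_right inner_ones_left sum_subtractf)

lemma agent_util_axis: "agent_util u p (axis i 1) = u $ i + p $ i"
  by (simp add: agent_util_def inner_axis)

lemma agent_util_ones_minus:
  assumes "x \<in> prob_simplex"
  shows "agent_util u (ones - u) x = 1"
  using assms by (simp add: agent_util_def prob_simplex_def inner_ones_left)

lemma l1norm_eq_twice_positive_part:
  assumes "(\<Sum>i\<in>UNIV. z $ i) = 0"
  shows "l1norm z = 2 * (\<Sum>i\<in>UNIV. max (z $ i) 0)"
proof -
  have "l1norm z = (\<Sum>i\<in>UNIV. 2 * max (z $ i) 0 - z $ i)"
    unfolding l1norm_def by (rule sum.cong) auto
  also have "\<dots> = 2 * (\<Sum>i\<in>UNIV. max (z $ i) 0)"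
    using assms by (simp add: sum_subtractf sum_distrib_left)
  finally show ?thesis .
qed

lemma l1norm_le_if_sum_zero_bounded_above:
  fixes z :: "real ^ 'n"
  assumes "(\<Sum>i\<in>UNIV. z $ i) = 0" and "\<And>i. z $ i \<le> c" and "0 \<le> c"
  shows "l1norm z \<le> 2 * real CARD('n) * c"
proof -
  have "(\<Sum>i\<in>UNIV. max (z $ i) 0) \<le> (\<Sum>i\<in>(UNIV::'n set). c)"
    by (rule sum_mono) (use assms in auto)
  then show ?thesis
    using l1norm_eq_twice_positive_part[OF assms(1)] by simp
qed

lemma eps_nash_Gamma0_eps_nonneg:
  assumes "eps_nash_Gamma0 u \<epsilon> p x"
  shows "0 \<le> \<epsilon>"
proof -
  have "x \<in> prob_simplex" and "\<forall>x'\<in>prob_simplex. agent_util u p x' \<le> agent_util u p x + \<epsilon>"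
    using assms unfolding eps_nash_Gamma0_def by auto
  then show ?thesis by auto
qed

lemma eps_nash_Gamma0_agent_util_le:
  assumes "\<forall>i. -1 \<le> u $ i \<and> u $ i \<le> 1" and "ones \<bullet> u = 0"
    and "eps_nash_Gamma0 u \<epsilon> p x"
  shows "agent_util u p x \<le> 1 + \<epsilon>"
proof -
  have "- agent_util u (ones - u) x \<le> - agent_util u p x + \<epsilon>"
    using assms ones_minus_in_principal_set unfolding eps_nash_Gamma0_def by blast
  moreover have "agent_util u (ones - u) x = 1"
    using assms(3) agent_util_ones_minus unfolding eps_nash_Gamma0_def by blast
  ultimately show ?thesis by simp
qed

lemma eps_nash_Gamma0_coordinate_le:
  assumes "\<forall>i. -1 \<le> u $ i \<and> u $ i \<le> 1" and "ones \<bullet> u = 0"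
    and "eps_nash_Gamma0 u \<epsilon> p x"
  shows "u $ i + p $ i \<le> 1 + 2 * \<epsilon>"
proof -
  have "agent_util u p (axis i 1) \<le> agent_util u p x + \<epsilon>"
    using assms(3) axis_in_prob_simplex unfolding eps_nash_Gamma0_def by blast
  then show ?thesis
    using eps_nash_Gamma0_agent_util_le[OF assms] by (simp add: agent_util_axis)
qed

theorem lemma5p1:
  fixes u p x :: "real ^ 'm" and \<epsilon> :: real
  assumes "\<forall>i. -1 \<le> u $ i \<and> u $ i \<le> 1"
    and "ones \<bullet> u = 0"
    and "eps_nash_Gamma0 u \<epsilon> p x"
  shows "\<exists>z. p = ones - u + z \<and> l1norm z \<le> 4 * real CARD('m) * \<epsilon>"
proof -
  define z where "z = p - ones + u"
  have z_nth: "z $ i = u $ i + p $ i - 1" for i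
    by (simp add: z_def)
  have "ones \<bullet> p = real CARD('m)"
    using assms(3) by (simp add: eps_nash_Gamma0_def principal_set_def)
  then have "(\<Sum>i\<in>UNIV. z $ i) = 0"
    using assms(2) by (simp add: z_nth inner_ones_left sum_subtractf sum.distrib)
  moreover have "z $ i \<le> 2 * \<epsilon>" for i
    using eps_nash_Gamma0_coordinate_le[OF assms, of i] by (simp add: z_nth)
  ultimately have "l1norm z \<le> 2 * real CARD('m) * (2 * \<epsilon>)"
    by (rule l1norm_le_if_sum_zero_bounded_above) (use eps_nash_Gamma0_eps_nonneg[OF assms(3)] in simp)
  moreover have "p = ones - u + z"
    by (simp add: z_def)
  ultimately show ?thesis by (intro exI[of _ z]) simp
qed

end
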